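(* For all retractable contracts $\rho,\sigma$: if $\rho$ is compliant with $\sigma$, then the judgment $\vartriangleright\rho\dashv\sigma$ (with empty assumption set) is derivable in the formal system for compliance.
   Context: Let $\mathcal N$ be a countable set of names and $\overline{\mathcal N}=\{\bar a\mid a\in\mathcal N\}$ a disjoint set of conames; $\alpha$ ranges over $\mathcal N\cup\overline{\mathcal N}$, with $\bar{\bar a}=a$. Retractable contracts are the closed expressions generated by $\sigma ::= \mathbf 1 \mid \sum_{i\in I} a_i.\sigma_i \ (\text{input}) \mid \sum_{i\in I}\bar a_i.\sigma_i\ (\text{retractable output}) \mid \bigoplus_{i\in I}\bar a_i.\sigma_i\ (\text{unretractable output}) \mid x \mid \mathsf{rec}\,x.\sigma$, where $I$ is non-empty and finite, names/conames in each choice are pairwise distinct, and $\sigma$ is not a variable in $\mathsf{rec}\,x.\sigma$. Choices are commutative; $\mathsf{rec}\,x.\sigma$ is identified with $\sigma[\mathsf{rec}\,x.\sigma/x]$. A unary $\bar a.\sigma$ may be read as either kind of output. Histories are stacks $\vec\gamma ::= [\,] \mid \vec\gamma:\sigma$ with $\sigma$ a retractable contract or the special symbol $\circ$. A contract with history is a pair $\langle\vec\gamma,\sigma\rangle$ with $\sigma$ a contract or $\circ$. Transitions: $\langle\vec\gamma,\alpha.\sigma+\sigma'\rangle\xrightarrow{\alpha}\langle\vec\gamma:\sigma',\sigma\rangle$ (for retractable choices, $+$ being input or retractable output sum); $\langle\vec\gamma,\bar a.\sigma\oplus\sigma'\rangle\xrightarrow{\tau}\langle\vec\gamma,\bar a.\sigma\rangle$;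 $\langle\vec\gamma,\alpha.\sigma\rangle\xrightarrow{\alpha}\langle\vec\gamma:\circ,\sigma\rangle$; $\langle\vec\gamma:\sigma',\sigma\rangle\xrightarrow{\mathsf{rb}}\langle\vec\gamma,\sigma'\rangle$. Client/server pairs $\langle\vec\delta,\rho\rangle\parallel\langle\vec\gamma,\sigma\rangle$ reduce by: (comm) if $\langle\vec\delta,\rho\rangle\xrightarrow{\alpha}\langle\vec\delta',\rho'\rangle$ and $\langle\vec\gamma,\sigma\rangle\xrightarrow{\bar\alpha}\langle\vec\gamma',\sigma'\rangle$ then the pair reduces to $\langle\vec\delta',\rho'\rangle\parallel\langle\vec\gamma',\sigma'\rangle$; ($\tau$) a $\tau$-transition of either component alone; (rbk) if both components do an $\mathsf{rb}$ transition and $\rho\neq\mathbf 1$, both roll back simultaneously; rule (rbk) applies only if neither (comm) nor ($\tau$) applies. Then $\langle\vec\delta,\rho\rangle$ is compliant with $\langle\vec\gamma,\sigma\rangle$ if whenever $\langle\vec\delta,\rho\rangle\parallel\langle\vec\gamma,\sigma\rangle$ reduces in finitely many steps to a pair $\langle\vec\delta',\rho'\rangle\parallel\langle\vec\gamma',\sigma'\rangle$ with no further reduction, we have $\rho'=\mathbf 1$. A contract $\rho$ is compliant with $\sigma$ if $\langle[\,],\rho\rangle$ is compliant with $\langle[\,],\sigma\rangle$. The formal system derives judgments $\Gamma\vartriangleright\rho\dashv\sigma$, $\Gamma$ a set of expressions $\rho'\dashv\sigma'$, as finite trees with rules (applied modulo fold/unfold of recursion): (Ax) $\Gamma\vartriangleright\mathbf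 1\dashv\sigma$; (Hyp) $\Gamma,\rho\dashv\sigma\vartriangleright\rho\dashv\sigma$; $(+,+)$ if $\rho=\sum_{i\in I}\alpha_i.\rho_i$, $\sigma=\sum_{j\in J}\bar\alpha_j.\sigma_j$ are retractable choices and $k\in I\cap J$, from $\Gamma,\rho\dashv\sigma\vartriangleright\rho_k\dashv\sigma_k$ infer $\Gamma\vartriangleright\rho\dashv\sigma$; $(\oplus,+)$ from $\Gamma,\bigoplus_{i\in I}\bar a_i.\rho_i\dashv\sum_{j\in I\cup J}a_j.\sigma_j\vartriangleright\rho_i\dashv\sigma_i$ for all $i\in I$ infer $\Gamma\vartriangleright\bigoplus_{i\in I}\bar a_i.\rho_i\dashv\sum_{j\in I\cup J}a_j.\sigma_j$; $(+,\oplus)$ symmetrically, from $\Gamma,\sum_{j\in I\cup J}a_j.\sigma_j\dashv\bigoplus_{i\in I}\bar a_i.\rho_i\vartriangleright\rho_i\dashv\sigma_i$ for all $i\in I$ infer $\Gamma\vartriangleright\sum_{j\in I\cup J}a_j.\sigma_j\dashv\bigoplus_{i\in I}\bar a_i.\rho_i$. *)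

theory Defs
  imports Main "HOL-Library.FSet"
begin

section \<open>Retractable contracts (raw syntax, de Bruijn indices for recursion variables)\<close>

text \<open>A choice is a finite set of pairs
(name, continuation); for outputs the name stands for the coname.\<close>

datatype ctr =
    One
  | Inp "(nat \<times> ctr) fset"
  | ROut "(nat \<times> ctr) fset"
  | UOut "(nat \<times> ctr) fset"
  | Var nat
  | Rec ctr

primrec shift :: "nat \<Rightarrow> ctr \<Rightarrow> ctr" where
  "shift k One = One"
| "shift k (Inp S) = Inp (fimage (map_prod id (shift k)) S)"
| "shift k (ROut S) = ROut (fimage (map_prod id (shift k)) S)"
| "shift k (UOut S) = UOut (fimage (map_prod id (shift k)) S)"
| "shift k (Var n) = (if n < k then Var n else Var (Suc n))"
| "shift k (Rec s) = Rec (shift (Suc k) s)"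

text \<open>\<open>subst k t s\<close>: substitute \<open>t\<close> for the variable with index \<open>k\<close> in \<open>s\<close>
(removing that binder level).\<close>
primrec subst :: "nat \<Rightarrow> ctr \<Rightarrow> ctr \<Rightarrow> ctr" where
  "subst k t One = One"
| "subst k t (Inp S) = Inp (fimage (map_prod id (subst k t)) S)"
| "subst k t (ROut S) = ROut (fimage (map_prod id (subst k t)) S)"
| "subst k t (UOut S) = UOut (fimage (map_prod id (subst k t)) S)"
| "subst k t (Var n) = (if n = k then t else if k < n then Var (n - 1) else Var n)"
| "subst k t (Rec s) = Rec (subst (Suc k) (shift 0 t) s)"

definition choice_ok :: "(nat \<times> ctr) fset \<Rightarrow> bool" where
  "choice_ok S \<longleftrightarrow> S \<noteq> {||} \<and>
     (\<forall>a c d. (a, c) |\<in>| S \<longrightarrow> (a, d) |\<in>| S \<longrightarrow> c = d)"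

inductive wf_at :: "nat \<Rightarrow> ctr \<Rightarrow> bool" where
  "wf_at k One"
| "choice_ok S \<Longrightarrow> (\<forall>(a, c) \<in> fset S. wf_at k c) \<Longrightarrow> wf_at k (Inp S)"
| "choice_ok S \<Longrightarrow> (\<forall>(a, c) \<in> fset S. wf_at k c) \<Longrightarrow> wf_at k (ROut S)"
| "choice_ok S \<Longrightarrow> (\<forall>(a, c) \<in> fset S. wf_at k c) \<Longrightarrow> wf_at k (UOut S)"
| "n < k \<Longrightarrow> wf_at k (Var n)"
| "wf_at (Suc k) s \<Longrightarrow> \<not> (\<exists>n. s = Var n) \<Longrightarrow> wf_at k (Rec s)"

definition rcontract :: "ctr \<Rightarrow> bool" where
  "rcontract s \<longleftrightarrow> wf_at 0 s"

section \<open>Identification: fold/unfold of recursion (as a congruence), and the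
double reading of unary outputs\<close>

inductive conv1 :: "ctr \<Rightarrow> ctr \<Rightarrow> bool" where
  unfold: "conv1 (Rec s) (subst 0 (Rec s) s)"
| rec_cong: "conv1 s s' \<Longrightarrow> conv1 (Rec s) (Rec s')"
| inp_cong: "(a, c) |\<in>| S \<Longrightarrow> conv1 c c' \<Longrightarrow>
     conv1 (Inp S) (Inp (finsert (a, c') (S |-| {|(a, c)|})))"
| rout_cong: "(a, c) |\<in>| S \<Longrightarrow> conv1 c c' \<Longrightarrow>
     conv1 (ROut S) (ROut (finsert (a, c') (S |-| {|(a, c)|})))"
| uout_cong: "(a, c) |\<in>| S \<Longrightarrow> conv1 c c' \<Longrightarrow>
     conv1 (UOut S) (UOut (finsert (a, c') (S |-| {|(a, c)|})))"
| unary: "conv1 (ROut {|x|}) (UOut {|x|})"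

text \<open>The identification is taken between well-formed expressions only (so that no
ill-formed intermediate term, e.g. one with a repeated name in a choice, can be used).\<close>
definition wfo :: "ctr \<Rightarrow> bool" where
  "wfo x \<longleftrightarrow> (\<exists>k. wf_at k x)"

definition eqv :: "ctr \<Rightarrow> ctr \<Rightarrow> bool" where
  "eqv = equivclp (\<lambda>x y. conv1 x y \<and> wfo x \<and> wfo y)"

text \<open>\<open>Circ\<close> is the special symbol \<open>\<circ>\<close>. A history is a stack, represented by a list
whose head is the top of the stack.\<close>
datatype cst = Circ | C ctr

type_synonym cfg = "cst list \<times> cst"

datatype lab = LIn nat | LOut nat | LTau | LRb

fun dual :: "lab \<Rightarrow> lab" where
  "dual (LIn a) = LOut a"
| "dual (LOut a) = LIn a"
| "dual l = l"

inductive ltr :: "cfg \<Rightarrow> lab \<Rightarrow> cfg \<Rightarrow> bool" where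
  inp_sum: "eqv s (Inp S) \<Longrightarrow> (a, c) |\<in>| S \<Longrightarrow> 2 \<le> fcard S \<Longrightarrow>
     ltr (h, C s) (LIn a) (C (Inp (S |-| {|(a, c)|})) # h, C c)"
| rout_sum: "eqv s (ROut S) \<Longrightarrow> (a, c) |\<in>| S \<Longrightarrow> 2 \<le> fcard S \<Longrightarrow>
     ltr (h, C s) (LOut a) (C (ROut (S |-| {|(a, c)|})) # h, C c)"
| uout_tau: "eqv s (UOut S) \<Longrightarrow> (a, c) |\<in>| S \<Longrightarrow> 2 \<le> fcard S \<Longrightarrow>
     ltr (h, C s) LTau (h, C (UOut {|(a, c)|}))"
| inp_one: "eqv s (Inp {|(a, c)|}) \<Longrightarrow> ltr (h, C s) (LIn a) (Circ # h, C c)"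
| out_one: "eqv s (ROut {|(a, c)|}) \<Longrightarrow> ltr (h, C s) (LOut a) (Circ # h, C c)"
| rb: "ltr (x # h, s) LRb (h, x)"

definition is_one :: "cst \<Rightarrow> bool" where
  "is_one x \<longleftrightarrow> (\<exists>r. x = C r \<and> eqv r One)"

inductive red_ct :: "cfg \<times> cfg \<Rightarrow> cfg \<times> cfg \<Rightarrow> bool" where
  comm: "ltr c l c' \<Longrightarrow> ltr s (dual l) s' \<Longrightarrow> l \<noteq> LTau \<Longrightarrow> l \<noteq> LRb \<Longrightarrow>
     red_ct (c, s) (c', s')"
| tau_l: "ltr c LTau c' \<Longrightarrow> red_ct (c, s) (c', s)"
| tau_r: "ltr s LTau s' \<Longrightarrow> red_ct (c, s) (c, s')"

inductive red :: "cfg \<times> cfg \<Rightarrow> cfg \<times> cfg \<Rightarrow> bool" where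
  ct: "red_ct p q \<Longrightarrow> red p q"
| rbk: "ltr c LRb c' \<Longrightarrow> ltr s LRb s' \<Longrightarrow> \<not> is_one (snd c) \<Longrightarrow>
     \<not> (\<exists>q. red_ct (c, s) q) \<Longrightarrow> red (c, s) (c', s')"

definition compliant_cfg :: "cfg \<Rightarrow> cfg \<Rightarrow> bool" where
  "compliant_cfg c s \<longleftrightarrow>
     (\<forall>c' s'. red\<^sup>*\<^sup>* (c, s) (c', s') \<longrightarrow> \<not> (\<exists>q. red (c', s') q) \<longrightarrow> is_one (snd c'))"

definition compliant :: "ctr \<Rightarrow> ctr \<Rightarrow> bool" where
  "compliant r s \<longleftrightarrow> compliant_cfg ([], C r) ([], C s)"

inductive deriv :: "(ctr \<times> ctr) set \<Rightarrow> ctr \<Rightarrow> ctr \<Rightarrow> bool" where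
  Ax: "eqv r One \<Longrightarrow> deriv \<Gamma> r s"
| Hyp: "(r', s') \<in> \<Gamma> \<Longrightarrow> eqv r r' \<Longrightarrow> eqv s s' \<Longrightarrow> deriv \<Gamma> r s"
| PlusPlus_io: "eqv r (Inp R) \<Longrightarrow> eqv s (ROut S) \<Longrightarrow> (a, rk) |\<in>| R \<Longrightarrow> (a, sk) |\<in>| S \<Longrightarrow>
     deriv (insert (r, s) \<Gamma>) rk sk \<Longrightarrow> deriv \<Gamma> r s"
| PlusPlus_oi: "eqv r (ROut R) \<Longrightarrow> eqv s (Inp S) \<Longrightarrow> (a, rk) |\<in>| R \<Longrightarrow> (a, sk) |\<in>| S \<Longrightarrow>
     deriv (insert (r, s) \<Gamma>) rk sk \<Longrightarrow> deriv \<Gamma> r s"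
| OplusPlus: "eqv r (UOut R) \<Longrightarrow> eqv s (Inp S) \<Longrightarrow> fst |`| R |\<subseteq>| fst |`| S \<Longrightarrow>
     (\<forall>a ra sa. (a, ra) |\<in>| R \<longrightarrow> (a, sa) |\<in>| S \<longrightarrow> deriv (insert (r, s) \<Gamma>) ra sa) \<Longrightarrow>
     deriv \<Gamma> r s"
| PlusOplus: "eqv r (Inp R) \<Longrightarrow> eqv s (UOut S) \<Longrightarrow> fst |`| S |\<subseteq>| fst |`| R \<Longrightarrow>
     (\<forall>a ra sa. (a, ra) |\<in>| R \<longrightarrow> (a, sa) |\<in>| S \<longrightarrow> deriv (insert (r, s) \<Gamma>) ra sa) \<Longrightarrow>
     deriv \<Gamma> r s"

end

theory Submission
  imports Defs
begin

text \<open>Every closed contract has a finite universe: the closed instances of its subterms,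
a set closed under unfolding of recursion and under taking branches, each of whose elements
is equivalent to a head normal form with branches again in the universe. Given compliant
\<open>\<rho>\<close> and \<open>\<sigma>\<close>, a derivation is built for compliant pairs of the two universes by
induction on the number of pairs not yet among the hypotheses; a pair already assumed is
closed by (Hyp). Otherwise the head normal forms must be complementary sums, as any other
configuration is stuck. Compliance of two retractable sums passes to some pair of common
branches, because failures of branches are rolled back and the next branch is tried; against
an unretractable output it passes to every branch, since a \<open>\<tau>\<close> step can commit to any
of them.\<close>

inductive_cases wf_at_InpE: "wf_at k (Inp S)"
inductive_cases wf_at_ROutE: "wf_at k (ROut S)"
inductive_cases wf_at_UOutE: "wf_at k (UOut S)"
inductive_cases wf_at_VarE: "wf_at k (Var n)"
inductive_cases wf_at_RecE: "wf_at k (Rec s)"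

lemma fimage_id_on: "(\<And>x. x |\<in>| S \<Longrightarrow> f x = x) \<Longrightarrow> f |`| S = S"
  by (metis fimage_cong fimage_ident id_apply)

lemma wf_at_mono: "wf_at k t \<Longrightarrow> k \<le> m \<Longrightarrow> wf_at m t"
proof (induction arbitrary: m rule: wf_at.induct)
  case (6 k s)
  then show ?case by (auto intro: wf_at.intros)
qed (auto intro!: wf_at.intros)

lemma shift_wf_at: "wf_at k t \<Longrightarrow> shift k t = t"
  by (induction rule: wf_at.induct) (auto intro!: fimage_id_on)

lemma subst_wf_at: "wf_at k t \<Longrightarrow> subst k u t = t"
  by (induction arbitrary: u rule: wf_at.induct) (auto intro!: fimage_id_on)

lemma choice_ok_map: "choice_ok S \<Longrightarrow> choice_ok (map_prod id f |`| S)"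
  unfolding choice_ok_def by (auto; metis)

lemma choice_ok_singleton: "choice_ok {|p|}"
  by (auto simp: choice_ok_def)

lemma choice_ok_unique: "choice_ok S \<Longrightarrow> (a, c) |\<in>| S \<Longrightarrow> (a, d) |\<in>| S \<Longrightarrow> c = d"
  unfolding choice_ok_def by blast

lemma fcard_singleton [simp]: "fcard {|a|} = 1"
  by (simp add: fcard_finsert_if)

lemma choice_ok_fminus:
  assumes "choice_ok R" "2 \<le> fcard R"
  shows "choice_ok (R |-| {|q|})"
proof -
  have "\<not> R |\<subseteq>| {|q|}"
    using assms(2) fcard_mono[of R "{|q|}"] by auto
  then have "R |-| {|q|} \<noteq> {||}" by auto
  then show ?thesis using assms(1) unfolding choice_ok_def by auto
qed

lemma fcard_names: "choice_ok S \<Longrightarrow> fcard (fst |`| S) = fcard S"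
proof -
  assume "choice_ok S"
  then have "inj_on fst (fset S)" unfolding choice_ok_def inj_on_def by auto
  then show ?thesis by (simp add: fcard.rep_eq fimage.rep_eq card_image)
qed

lemma fset_eq_singleton: "S \<noteq> {||} \<Longrightarrow> \<not> 2 \<le> fcard S \<Longrightarrow> \<exists>p. S = {|p|}"
proof -
  assume "S \<noteq> {||}" "\<not> 2 \<le> fcard S"
  then have "fcard S = 1" using fcard_0_eq[of S] by linarith
  then have "card (fset S) = 1" by (simp add: fcard.rep_eq)
  then obtain p where "fset S = {p}" using card_1_singletonE by blast
  then show ?thesis by (metis bot_fset.rep_eq finsert.rep_eq fset_inject)
qed

lemma names_finsert_replace:
  "(a, c) |\<in>| S \<Longrightarrow> fst |`| finsert (a, c') (S |-| {|(a, c)|}) = fst |`| S"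
proof -
  assume "(a, c) |\<in>| S"
  then have "fst |`| S = finsert a (fst |`| (S |-| {|(a, c)|}))"
    by (metis fimage_finsert finsert_fminus fst_conv)
  then show ?thesis by simp
qed

lemma mem_names: "(a, c) |\<in>| S \<Longrightarrow> a |\<in>| fst |`| S"
  by (metis fimage_eqI fst_conv)

lemma names_mem: "a |\<in>| fst |`| R \<Longrightarrow> \<exists>c. (a, c) |\<in>| R"
  by force

lemma wf_at_choice_ok: "K \<in> {Inp, ROut, UOut} \<Longrightarrow> wf_at k (K S) \<Longrightarrow> choice_ok S"
  by (auto elim: wf_at_InpE wf_at_ROutE wf_at_UOutE)

lemma wfo_choice_ok: "K \<in> {Inp, ROut, UOut} \<Longrightarrow> wfo (K S) \<Longrightarrow> choice_ok S"
  unfolding wfo_def using wf_at_choice_ok by blast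

lemma wf_at_choice_subset:
  assumes K: "K \<in> {Inp, ROut, UOut}" and w: "wf_at k (K S)" and "choice_ok S'" "S' |\<subseteq>| S"
  shows "wf_at k (K S')"
proof -
  have "wf_at k c" if "(a, c) |\<in>| S" for a c
    using K w that by (auto elim!: wf_at_InpE wf_at_ROutE wf_at_UOutE)
  then show ?thesis using K \<open>choice_ok S'\<close> fsubsetD[OF \<open>S' |\<subseteq>| S\<close>] by (auto intro!: wf_at.intros)
qed

lemma wfo_choice_subset:
  "K \<in> {Inp, ROut, UOut} \<Longrightarrow> wfo (K S) \<Longrightarrow> choice_ok S' \<Longrightarrow> S' |\<subseteq>| S \<Longrightarrow> wfo (K S')"
  unfolding wfo_def using wf_at_choice_subset by blast

lemma wfo_UOut_singleton: "wfo (UOut S) \<Longrightarrow> (a, c) |\<in>| S \<Longrightarrow> wfo (UOut {|(a, c)|})"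
  using wfo_choice_subset[of UOut S "{|(a, c)|}"] choice_ok_singleton by simp

lemma eqv_sym: "eqv x y \<Longrightarrow> eqv y x"
  unfolding eqv_def by (rule equivclp_sym)

lemma eqv_trans: "eqv x y \<Longrightarrow> eqv y z \<Longrightarrow> eqv x z"
  unfolding eqv_def by (rule equivclp_trans)

lemma eqv_refl [simp]: "eqv x x"
  unfolding eqv_def by simp

lemma eqvI: "conv1 x y \<Longrightarrow> wfo x \<Longrightarrow> wfo y \<Longrightarrow> eqv x y"
  unfolding eqv_def by auto

lemma wfo_eqv: "eqv x y \<Longrightarrow> wfo x \<Longrightarrow> wfo y"
  unfolding eqv_def by (induction rule: equivclp_induct) auto

lemma wf_at_UOut_ROut: "wf_at k (UOut S) \<Longrightarrow> wf_at k (ROut S)"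
  by (erule wf_at_UOutE) (simp add: wf_at.intros)

lemma wfo_UOut_ROut: "wfo (UOut S) \<Longrightarrow> wfo (ROut S)"
  unfolding wfo_def using wf_at_UOut_ROut by blast

lemma eqv_UOut_singleton: "wfo (UOut {|p|}) \<Longrightarrow> eqv (UOut {|p|}) (ROut {|p|})"
  by (rule eqv_sym, rule eqvI[OF conv1.unary wfo_UOut_ROut])

datatype shape = SOne | SInp "nat fset" | SROut "nat fset" | SUOut "nat fset"

text \<open>Recursion variables are looked up in \<open>\<rho>\<close>; the value bound by \<open>Rec\<close> is irrelevant
because bodies of well-formed recursions are guarded. A unary unretractable output has the
shape of a retractable one, matching the identification \<open>conv1.unary\<close>.\<close>

primrec shape_env :: "(nat \<Rightarrow> shape) \<Rightarrow> ctr \<Rightarrow> shape" where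
  "shape_env \<rho> One = SOne"
| "shape_env \<rho> (Inp S) = SInp (fst |`| S)"
| "shape_env \<rho> (ROut S) = SROut (fst |`| S)"
| "shape_env \<rho> (UOut S) =
     (if 2 \<le> fcard (fst |`| S) then SUOut (fst |`| S) else SROut (fst |`| S))"
| "shape_env \<rho> (Var n) = \<rho> n"
| "shape_env \<rho> (Rec s) = shape_env (case_nat SOne \<rho>) s"

definition shape :: "ctr \<Rightarrow> shape" where
  "shape = shape_env (\<lambda>_. SOne)"

primrec guarded :: "nat \<Rightarrow> ctr \<Rightarrow> bool" where
  "guarded k One = True"
| "guarded k (Inp S) = True"
| "guarded k (ROut S) = True"
| "guarded k (UOut S) = True"
| "guarded k (Var n) = (n \<noteq> k)"
| "guarded k (Rec s) = guarded (Suc k) s"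

lemma shape_env_shift:
  "shape_env \<rho> (shift k t) = shape_env (\<lambda>i. if i < k then \<rho> i else \<rho> (Suc i)) t"
proof (induction t arbitrary: \<rho> k)
  case (Rec t)
  have "case_nat SOne (\<lambda>i. if i < k then \<rho> i else \<rho> (Suc i)) =
        (\<lambda>i. if i < Suc k then case_nat SOne \<rho> i else case_nat SOne \<rho> (Suc i))"
    by (auto simp: fun_eq_iff split: nat.split)
  then show ?case using Rec by simp
qed auto

lemma shape_env_subst:
  "shape_env \<rho> (subst k t s) =
     shape_env (\<lambda>i. if i < k then \<rho> i else if i = k then shape_env \<rho> t else \<rho> (i - 1)) s"
proof (induction s arbitrary: \<rho> k t)
  case (Rec s)
  have "shape_env (case_nat SOne \<rho>) (shift 0 t) = shape_env \<rho> t"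
    by (simp add: shape_env_shift)
  then have "case_nat SOne (\<lambda>i. if i < k then \<rho> i else if i = k then shape_env \<rho> t else \<rho> (i - 1)) =
      (\<lambda>i. if i < Suc k then case_nat SOne \<rho> i
           else if i = Suc k then shape_env (case_nat SOne \<rho>) (shift 0 t)
           else case_nat SOne \<rho> (i - 1))"
    by (auto simp: fun_eq_iff split: nat.split)
  then show ?case using Rec by simp
qed auto

lemma shape_env_guarded: "guarded k s \<Longrightarrow> shape_env (\<rho>(k := v)) s = shape_env \<rho> s"
proof (induction s arbitrary: k \<rho>)
  case (Rec s)
  have "case_nat SOne (\<rho>(k := v)) = (case_nat SOne \<rho>)(Suc k := v)"
    by (auto simp: fun_eq_iff split: nat.split)
  then show ?case
    using Rec.IH[of "Suc k" "case_nat SOne \<rho>"] Rec.prems by (simp only: shape_env.simps guarded.simps)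
qed auto

lemma wf_at_guarded: "wf_at m t \<Longrightarrow> (\<forall>n. t \<noteq> Var n) \<Longrightarrow> guarded j t"
  by (induction t arbitrary: m j) (auto elim: wf_at_RecE)

lemma shape_env_unfold:
  assumes "wfo (Rec s)"
  shows "shape_env \<rho> (subst 0 (Rec s) s) = shape_env \<rho> (Rec s)"
proof -
  have "guarded 0 s" using assms wf_at_guarded by (auto simp: wfo_def elim: wf_at_RecE)
  have "(\<lambda>i. if i < 0 then \<rho> i else if i = 0 then shape_env \<rho> (Rec s) else \<rho> (i - 1)) =
      (case_nat SOne \<rho>)(0 := shape_env \<rho> (Rec s))"
    by (auto simp: fun_eq_iff split: nat.split)
  then have "shape_env \<rho> (subst 0 (Rec s) s) = shape_env ((case_nat SOne \<rho>)(0 := shape_env \<rho> (Rec s))) s"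
    by (simp only: shape_env_subst)
  also have "\<dots> = shape_env \<rho> (Rec s)"
    using shape_env_guarded[OF \<open>guarded 0 s\<close>] by simp
  finally show ?thesis .
qed

lemma conv1_shape_env: "conv1 u v \<Longrightarrow> wfo u \<Longrightarrow> shape_env \<rho> u = shape_env \<rho> v"
proof (induction arbitrary: \<rho> rule: conv1.induct)
  case (unfold s)
  then show ?case by (simp add: shape_env_unfold)
next
  case (rec_cong s s')
  then have "wfo s" by (auto simp: wfo_def elim: wf_at_RecE)
  then show ?case using rec_cong by simp
next
  case (inp_cong a c S) then show ?case by (simp only: shape_env.simps names_finsert_replace)
next
  case (rout_cong a c S) then show ?case by (simp only: shape_env.simps names_finsert_replace)
next
  case (uout_cong a c S) then show ?case by (simp only: shape_env.simps names_finsert_replace)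
qed simp

lemma eqv_shape: "eqv x y \<Longrightarrow> shape x = shape y"
  unfolding eqv_def shape_def
  by (induction rule: equivclp_induct) (simp, metis conv1_shape_env)

section \<open>A finite universe closed under unfolding\<close>

primrec inst :: "nat \<Rightarrow> ctr list \<Rightarrow> ctr \<Rightarrow> ctr" where
  "inst d e One = One"
| "inst d e (Inp S) = Inp (map_prod id (inst d e) |`| S)"
| "inst d e (ROut S) = ROut (map_prod id (inst d e) |`| S)"
| "inst d e (UOut S) = UOut (map_prod id (inst d e) |`| S)"
| "inst d e (Var n) =
     (if n < d then Var n else if n - d < length e then e ! (n - d) else Var (n - length e))"
| "inst d e (Rec s) = Rec (inst (Suc d) e s)"

lemma inst_Nil: "inst d [] u = u"
  by (induction u arbitrary: d) (auto intro!: fimage_id_on)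

lemma subst_inst:
  assumes "\<forall>x\<in>set e. wf_at 0 x" "wf_at 0 t"
  shows "subst d t (inst (Suc d) e s) = inst d (t # e) s"
  using assms
proof (induction s arbitrary: d)
  case (Var n)
  consider "n < d" | "n = d" | "d < n" "n - Suc d < length e" | "d < n" "\<not> n - Suc d < length e"
    by linarith
  then show ?case
  proof cases
    case 3
    then have "wf_at d (e ! (n - Suc d))" using Var.prems(1) wf_at_mono[of 0 "e ! (n - Suc d)" d] by simp
    then show ?thesis using 3 subst_wf_at by (auto simp: nth_Cons')
  next
    case 4
    then have "d < n - length e" "\<not> n - d < Suc (length e)" by linarith+
    with 4 show ?thesis by simp
  qed simp_all
next
  case (Rec s)
  then show ?case using shift_wf_at[of 0 t] by simp
qed (auto simp: fset.map_comp comp_def intro!: fimage_cong)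

lemma wf_at_inst:
  "wf_at m u \<Longrightarrow> m = d + length e \<Longrightarrow> \<forall>x\<in>set e. wf_at 0 x \<Longrightarrow> wf_at d (inst d e u)"
proof (induction arbitrary: d rule: wf_at.induct)
  case (5 n k)
  show ?case
  proof (cases "n < d")
    case False
    then have "n - d < length e" using 5 by simp
    moreover have "wf_at 0 (e ! (n - d))" using 5 calculation by simp
    ultimately show ?thesis using False wf_at_mono[of 0 _ d] by simp
  qed (simp add: wf_at.intros)
next
  case (6 k s)
  have "wf_at (Suc d) (inst (Suc d) e s)" using 6 by simp
  moreover have "\<forall>n. inst (Suc d) e s \<noteq> Var n" using 6(2) by (cases s) auto
  ultimately show ?case by (simp add: wf_at.intros)
qed (auto intro!: wf_at.intros choice_ok_map)

lemma wf_at_inst_closed: "wf_at (length e) u \<Longrightarrow> \<forall>x\<in>set e. wf_at 0 x \<Longrightarrow> wf_at 0 (inst 0 e u)"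
  using wf_at_inst by fastforce

lemma wf_at_unfold:
  assumes "wf_at 0 (Rec s)"
  shows "wf_at 0 (subst 0 (Rec s) s)"
proof -
  have "subst 0 (Rec s) s = inst 0 [Rec s] s"
    using subst_inst[of "[]" "Rec s" 0 s] assms by (simp add: inst_Nil)
  then show ?thesis using assms wf_at_inst_closed[of "[Rec s]" s] by (auto elim: wf_at_RecE)
qed

primrec children :: "ctr \<Rightarrow> ctr set" where
  "children One = {}"
| "children (Inp S) = snd ` fset S"
| "children (ROut S) = snd ` fset S"
| "children (UOut S) = snd ` fset S"
| "children (Var n) = {}"
| "children (Rec s) = {}"

lemma mem_children: "(a, c) |\<in>| S \<Longrightarrow> c \<in> snd ` fset S"
  by force

lemma children_choice: "u \<in> {Inp S, ROut S, UOut S} \<Longrightarrow> children u = snd ` fset S"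
  by (elim insertE emptyE) simp_all

lemma children_inst_choice:
  "u \<in> {Inp S, ROut S, UOut S} \<Longrightarrow> children (inst d e u) = inst d e ` snd ` fset S"
  by (elim insertE emptyE) (simp_all add: image_image)

text \<open>\<open>reach e u\<close> collects the closed instances, under the environment \<open>e\<close>, of the subterms
of \<open>u\<close>; a bound variable is instantiated by the closed recursion that binds it.\<close>

primrec reach :: "ctr list \<Rightarrow> ctr \<Rightarrow> ctr set" where
  "reach e One = {One}"
| "reach e (Inp S) = insert (inst 0 e (Inp S)) (\<Union> (snd ` fset (map_prod id (reach e) |`| S)))"
| "reach e (ROut S) = insert (inst 0 e (ROut S)) (\<Union> (snd ` fset (map_prod id (reach e) |`| S)))"
| "reach e (UOut S) = insert (inst 0 e (UOut S)) (\<Union> (snd ` fset (map_prod id (reach e) |`| S)))"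
| "reach e (Var n) = {inst 0 e (Var n)}"
| "reach e (Rec s) = insert (inst 0 e (Rec s)) (reach (inst 0 e (Rec s) # e) s)"

lemma finite_reach: "finite (reach e u)"
proof (induction u arbitrary: e)
  case (Inp S) then show ?case by (force intro!: finite_Union)
next
  case (ROut S) then show ?case by (force intro!: finite_Union)
next
  case (UOut S) then show ?case by (force intro!: finite_Union)
qed auto

lemma inst_mem_reach: "inst 0 e u \<in> reach e u"
  by (cases u) auto

lemma reach_choice:
  "u \<in> {Inp S, ROut S, UOut S} \<Longrightarrow> reach e u = insert (inst 0 e u) (\<Union>c \<in> snd ` fset S. reach e c)"
  by (elim insertE emptyE) (simp_all add: image_image)

inductive rec_env :: "ctr set \<Rightarrow> ctr list \<Rightarrow> bool" where
  "rec_env U []"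
| "rec_env U e \<Longrightarrow> reach e (Rec s) \<subseteq> U \<Longrightarrow> wf_at 0 (inst 0 e (Rec s)) \<Longrightarrow>
   rec_env U (inst 0 e (Rec s) # e)"

lemma rec_env_closed: "rec_env U e \<Longrightarrow> \<forall>x\<in>set e. wf_at 0 x"
  by (induction rule: rec_env.induct) auto

lemma rec_env_nth: "rec_env U e \<Longrightarrow> i < length e \<Longrightarrow>
   \<exists>e' s. e ! i = inst 0 e' (Rec s) \<and> rec_env U e' \<and> reach e' (Rec s) \<subseteq> U \<and> wf_at 0 (e ! i)"
proof (induction arbitrary: i rule: rec_env.induct)
  case (2 U e s)
  then show ?case by (cases i) (auto intro: rec_env.intros)
qed simp

definition unfolds_within :: "ctr set \<Rightarrow> ctr \<Rightarrow> bool" where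
  "unfolds_within U x \<longleftrightarrow> wf_at 0 x \<and> children x \<subseteq> U \<and> (\<forall>s. x = Rec s \<longrightarrow> subst 0 x s \<in> U)"

lemma unfolds_within_inst_Rec:
  assumes "rec_env U e" "reach e (Rec s) \<subseteq> U" "wf_at 0 (inst 0 e (Rec s))"
  shows "unfolds_within U (inst 0 e (Rec s))"
proof -
  let ?x = "inst 0 e (Rec s)"
  have "subst 0 ?x (inst 1 e s) = inst 0 (?x # e) s"
    using subst_inst[OF rec_env_closed[OF assms(1)] assms(3), of 0 s] by simp
  then show ?thesis
    using assms inst_mem_reach[of "?x # e" s] by (auto simp: unfolds_within_def)
qed

lemma wf_at_children: "wf_at k u \<Longrightarrow> c \<in> children u \<Longrightarrow> wf_at k c"
  by (induction rule: wf_at.induct) auto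

lemma reach_choice_unfolds_within:
  assumes u: "u \<in> {Inp S, ROut S, UOut S}" and e: "rec_env U e"
    and sub: "reach e u \<subseteq> U" and w: "wf_at (length e) u"
    and IH: "\<And>p c e. p \<in> fset S \<Longrightarrow> c \<in> Basic_BNFs.snds p \<Longrightarrow>
      rec_env U e \<Longrightarrow> reach e c \<subseteq> U \<Longrightarrow> wf_at (length e) c \<Longrightarrow> \<forall>x\<in>reach e c. unfolds_within U x"
  shows "\<forall>x\<in>reach e u. unfolds_within U x"
proof -
  have sub_children: "reach e c \<subseteq> U" if "c \<in> snd ` fset S" for c
    using sub that unfolding reach_choice[OF u] by blast
  have "children (inst 0 e u) \<subseteq> U"
    using sub_children inst_mem_reach by (auto simp: children_inst_choice[OF u])
  moreover have "wf_at 0 (inst 0 e u)" using wf_at_inst_closed[OF w rec_env_closed[OF e]] .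
  ultimately have "unfolds_within U (inst 0 e u)" using u by (auto simp: unfolds_within_def)
  moreover have "\<forall>x\<in>reach e c. unfolds_within U x" if c: "c \<in> snd ` fset S" for c
  proof -
    obtain a where "(a, c) \<in> fset S" using c by force
    moreover have "c \<in> Basic_BNFs.snds (a, c)" by (simp add: prod_set_defs)
    moreover have "wf_at (length e) c" using wf_at_children[OF w] children_choice[OF u] c by simp
    ultimately show ?thesis using IH[OF _ _ e] sub_children[OF c] by blast
  qed
  ultimately show ?thesis unfolding reach_choice[OF u] by blast
qed

lemma reach_unfolds_within:
  "rec_env U e \<Longrightarrow> reach e u \<subseteq> U \<Longrightarrow> wf_at (length e) u \<Longrightarrow> \<forall>x\<in>reach e u. unfolds_within U x"
proof (induction u arbitrary: e)
  case (Inp S)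
  show ?case by (rule reach_choice_unfolds_within[OF _ Inp.prems Inp.IH]) simp
next
  case (ROut S)
  show ?case by (rule reach_choice_unfolds_within[OF _ ROut.prems ROut.IH]) simp
next
  case (UOut S)
  show ?case by (rule reach_choice_unfolds_within[OF _ UOut.prems UOut.IH]) simp
next
  case (Var n)
  then have n: "n < length e" by (auto elim: wf_at_VarE)
  then obtain e' s where "e ! n = inst 0 e' (Rec s)" "rec_env U e'" "reach e' (Rec s) \<subseteq> U" "wf_at 0 (e ! n)"
    using rec_env_nth[OF Var.prems(1)] by blast
  then show ?case using n unfolds_within_inst_Rec by auto
next
  case (Rec s)
  let ?x = "inst 0 e (Rec s)"
  have wx: "wf_at 0 ?x" using wf_at_inst_closed[OF Rec.prems(3) rec_env_closed[OF Rec.prems(1)]] .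
  have "rec_env U (?x # e)" using Rec.prems(1,2) wx by (rule rec_env.intros(2))
  moreover have "wf_at (length (?x # e)) s" using Rec.prems(3) by (auto elim: wf_at_RecE)
  ultimately have "\<forall>x\<in>reach (?x # e) s. unfolds_within U x"
    using Rec.IH Rec.prems(2) by auto
  then show ?case using unfolds_within_inst_Rec[OF Rec.prems(1,2) wx] by simp
qed (simp add: unfolds_within_def wf_at.intros)

definition universe :: "ctr \<Rightarrow> ctr set" where
  "universe t = reach [] t"

lemma finite_universe: "finite (universe t)"
  by (simp add: universe_def finite_reach)

lemma mem_universe: "t \<in> universe t"
  using inst_mem_reach[of "[]" t] by (simp add: universe_def inst_Nil)

lemma universe_unfolds_within: "wf_at 0 t \<Longrightarrow> \<forall>x\<in>universe t. unfolds_within (universe t) x"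
  using reach_unfolds_within[of "universe t" "[]" t] by (simp add: universe_def rec_env.intros)

section \<open>Head normal forms\<close>

definition hnf :: "ctr \<Rightarrow> bool" where
  "hnf x \<longleftrightarrow> x = One \<or> (\<exists>S. x = Inp S) \<or> (\<exists>S. x = ROut S) \<or> (\<exists>S. x = UOut S \<and> 2 \<le> fcard S)"

primrec rec_depth :: "ctr \<Rightarrow> nat" where
  "rec_depth One = 0"
| "rec_depth (Inp S) = 0"
| "rec_depth (ROut S) = 0"
| "rec_depth (UOut S) = 0"
| "rec_depth (Var n) = 0"
| "rec_depth (Rec s) = Suc (rec_depth s)"

lemma rec_depth_subst: "guarded k s \<Longrightarrow> rec_depth (subst k t s) = rec_depth s"
  by (induction s arbitrary: k t) auto

lemma hnf_exists:
  assumes U: "\<forall>x\<in>U. unfolds_within U x"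
  shows "x \<in> U \<Longrightarrow> \<exists>y. eqv x y \<and> hnf y \<and> children y \<subseteq> U"
proof (induction "rec_depth x" arbitrary: x rule: less_induct)
  case less
  have ux: "unfolds_within U x" using U less.prems by blast
  then have wx: "wf_at 0 x" by (simp add: unfolds_within_def)
  have hnf_case: "hnf x \<Longrightarrow> ?case" using ux by (intro exI[of _ x]) (auto simp: unfolds_within_def)
  show ?case
  proof (cases x)
    case (UOut S)
    show ?thesis
    proof (cases "2 \<le> fcard S")
      case False
      have "choice_ok S" using wx UOut by (auto elim: wf_at_UOutE)
      then obtain p where S: "S = {|p|}" using fset_eq_singleton[OF _ False] by (auto simp: choice_ok_def)
      have "eqv x (ROut S)"
        using eqv_UOut_singleton[of p] wx UOut S unfolding wfo_def by blast
      then show ?thesis using ux UOut by (intro exI[of _ "ROut S"]) (simp add: hnf_def unfolds_within_def)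
    qed (use hnf_case UOut in \<open>simp add: hnf_def\<close>)
  next
    case (Var n)
    then show ?thesis using wx by (auto elim: wf_at_VarE)
  next
    case (Rec s)
    let ?x' = "subst 0 (Rec s) s"
    have "guarded 0 s" using wx Rec wf_at_guarded by (auto elim: wf_at_RecE)
    then have "rec_depth ?x' < rec_depth x" using Rec rec_depth_subst by simp
    moreover have "?x' \<in> U" using ux Rec by (simp add: unfolds_within_def)
    ultimately obtain y where y: "eqv ?x' y" "hnf y" "children y \<subseteq> U"
      using less.hyps by blast
    have "wfo x" "wfo ?x'" using wx wf_at_unfold Rec unfolding wfo_def by blast+
    then have "eqv x ?x'" using eqvI[OF conv1.unfold[of s]] Rec by simp
    then show ?thesis using y eqv_trans[of x ?x' y] by blast
  qed (use hnf_case in \<open>simp_all add: hnf_def\<close>)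
qed

section \<open>Stuck and failing configurations\<close>

definition stuck :: "cfg \<times> cfg \<Rightarrow> bool" where
  "stuck p \<longleftrightarrow> \<not> (\<exists>q. red p q)"

definition fails :: "cfg \<times> cfg \<Rightarrow> bool" where
  "fails p \<longleftrightarrow> (\<exists>q. red\<^sup>*\<^sup>* p q \<and> stuck q \<and> \<not> is_one (snd (fst q)))"

lemma compliant_iff_not_fails: "compliant r s \<longleftrightarrow> \<not> fails (([], C r), ([], C s))"
  unfolding compliant_def compliant_cfg_def fails_def stuck_def by force

lemma fails_red: "red\<^sup>*\<^sup>* p q \<Longrightarrow> fails q \<Longrightarrow> fails p"
  unfolding fails_def by (meson rtranclp_trans)

lemma fails_stuck: "stuck p \<Longrightarrow> \<not> is_one (snd (fst p)) \<Longrightarrow> fails p"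
  unfolding fails_def by blast

lemma compliant_red:
  "compliant x y \<Longrightarrow> red (([], C x), ([], C y)) (([], C x'), ([], C y')) \<Longrightarrow> compliant x' y'"
  unfolding compliant_iff_not_fails using fails_red by blast

lemma not_is_one_Circ: "\<not> is_one Circ"
  by (simp add: is_one_def)

lemma not_is_one_shape: "shape x \<noteq> SOne \<Longrightarrow> \<not> is_one (C x)"
  unfolding is_one_def using eqv_shape by (force simp: shape_def)

lemma ltr_LIn_shape: "ltr (h, C z) (LIn a) q \<Longrightarrow> \<exists>N. shape z = SInp N \<and> a |\<in>| N"
  by (erule ltr.cases) (auto dest!: eqv_shape simp: shape_def intro: mem_names)

lemma ltr_LOut_shape: "ltr (h, C z) (LOut a) q \<Longrightarrow> \<exists>N. shape z = SROut N \<and> a |\<in>| N"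
  by (erule ltr.cases) (auto dest!: eqv_shape simp: shape_def intro: mem_names)

lemma ltr_LTau_shape:
  assumes "ltr (h, C z) LTau q" "wfo z"
  shows "\<exists>N. shape z = SUOut N"
  using assms(1)
proof cases
  case (uout_tau S a c)
  then have "choice_ok S" using wfo_choice_ok[of UOut] wfo_eqv assms(2) by blast
  then show ?thesis using uout_tau eqv_shape[OF uout_tau(2)] by (simp add: shape_def fcard_names)
qed

lemma ltr_Circ: "ltr (h, Circ) l q \<Longrightarrow> l = LRb"
  by (erule ltr.cases) auto

lemma ltr_LRb_history: "ltr (h, x) LRb q \<Longrightarrow> h \<noteq> []"
  by (erule ltr.cases) auto

definition inputs :: "cst \<Rightarrow> nat fset" where
  "inputs X = (case X of Circ \<Rightarrow> {||} | C x \<Rightarrow> (case shape x of SInp N \<Rightarrow> N | _ \<Rightarrow> {||}))"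

definition outputs :: "cst \<Rightarrow> nat fset" where
  "outputs X = (case X of Circ \<Rightarrow> {||} | C x \<Rightarrow> (case shape x of SROut N \<Rightarrow> N | _ \<Rightarrow> {||}))"

definition tau_free :: "cst \<Rightarrow> bool" where
  "tau_free X = (case X of Circ \<Rightarrow> True | C x \<Rightarrow> wfo x \<and> (\<forall>N. shape x \<noteq> SUOut N))"

lemma ltr_tau_free:
  assumes "ltr (h, X) l q" "tau_free X"
  shows "l \<noteq> LTau \<and> (\<forall>a. l = LIn a \<longrightarrow> a |\<in>| inputs X) \<and> (\<forall>a. l = LOut a \<longrightarrow> a |\<in>| outputs X)"
proof (cases X)
  case Circ
  then show ?thesis using ltr_Circ assms by blast
next
  case (C x)
  then show ?thesis using assms
    by (auto simp: tau_free_def inputs_def outputs_def dest: ltr_LTau_shape ltr_LIn_shape ltr_LOut_shape)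
qed

lemma stuckI:
  assumes "h1 = [] \<or> h2 = []" "tau_free X" "tau_free Y"
    "inputs X |\<inter>| outputs Y = {||}" "outputs X |\<inter>| inputs Y = {||}"
  shows "stuck ((h1, X), (h2, Y))"
proof -
  have no_tau: "ltr (h1, X) l q \<Longrightarrow> l \<noteq> LTau" "ltr (h2, Y) l q \<Longrightarrow> l \<noteq> LTau" for l q
    using ltr_tau_free assms(2,3) by blast+
  have no_comm: "l = LTau \<or> l = LRb" if "ltr (h1, X) l q" "ltr (h2, Y) (dual l) q'" for l q q'
    using ltr_tau_free[OF that(1) assms(2)] ltr_tau_free[OF that(2) assms(3)] assms(4,5)
    by (cases l) (auto simp: fset_eq_iff)
  show ?thesis
    unfolding stuck_def
  proof
    assume "\<exists>q. red ((h1, X), (h2, Y)) q"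
    then obtain q where "red ((h1, X), (h2, Y)) q" ..
    then show False
    proof (cases rule: red.cases)
      case ct
      then show False by (cases rule: red_ct.cases) (use no_tau no_comm in blast)+
    next
      case rbk
      then show False using assms(1) ltr_LRb_history by auto
    qed
  qed
qed

section \<open>Rolling back to the bottom of the history\<close>

text \<open>Histories list the top of the stack first, so \<open>extend g\<close> places \<open>g\<close> at the bottom.\<close>

fun extend :: "cst list \<Rightarrow> cfg \<Rightarrow> cfg" where
  "extend g (h, x) = (h @ g, x)"

lemma ltr_extend: "ltr c l c' \<Longrightarrow> ltr (extend g c) l (extend g c')"
  by (induction rule: ltr.induct) (auto intro: ltr.intros)

lemma ltr_extend_inv: "ltr (extend g c) l q \<Longrightarrow> l \<noteq> LRb \<Longrightarrow> \<exists>q'. ltr c l q'"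
  by (cases c) (auto elim!: ltr.cases intro: ltr.intros)

lemma dual_eq_iff [simp]: "dual l = LTau \<longleftrightarrow> l = LTau" "dual l = LRb \<longleftrightarrow> l = LRb"
  by (cases l; simp)+

lemma red_ct_extend:
  "red_ct (c, s) (c', s') \<Longrightarrow> red_ct (extend g1 c, extend g2 s) (extend g1 c', extend g2 s')"
  by (auto elim!: red_ct.cases intro: red_ct.intros ltr_extend)

lemma red_ct_extend_inv: "red_ct (extend g1 c, extend g2 s) q \<Longrightarrow> \<exists>q'. red_ct (c, s) q'"
proof -
  assume "red_ct (extend g1 c, extend g2 s) q"
  then consider (comm) l c' s' where "ltr (extend g1 c) l c'" "ltr (extend g2 s) (dual l) s'"
      "l \<noteq> LTau" "l \<noteq> LRb"
    | (tau_l) c' where "ltr (extend g1 c) LTau c'"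
    | (tau_r) s' where "ltr (extend g2 s) LTau s'"
    by (auto simp: red_ct.simps)
  then show ?thesis
  proof cases
    case comm
    then show ?thesis by (metis dual_eq_iff(2) ltr_extend_inv red_ct.comm)
  next
    case tau_l
    then show ?thesis using ltr_extend_inv by (blast intro: red_ct.tau_l)
  next
    case tau_r
    then show ?thesis using ltr_extend_inv by (blast intro: red_ct.tau_r)
  qed
qed

lemma red_extend:
  assumes "red (c, s) (c', s')"
  shows "red (extend g1 c, extend g2 s) (extend g1 c', extend g2 s')"
proof -
  from assms consider (ct) "red_ct (c, s) (c', s')"
    | (rbk) "ltr c LRb c'" "ltr s LRb s'" "\<not> is_one (snd c)" "\<not> (\<exists>q. red_ct (c, s) q)"
    by (auto simp: red.simps)
  then show ?thesis
  proof cases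
    case ct
    then show ?thesis by (blast intro: red.ct red_ct_extend)
  next
    case rbk
    then have "\<not> (\<exists>q. red_ct (extend g1 c, extend g2 s) q)" using red_ct_extend_inv by blast
    moreover have "snd (extend g1 c) = snd c" by (cases c) simp
    ultimately show ?thesis using red.rbk[OF ltr_extend[OF rbk(1)] ltr_extend[OF rbk(2)]] rbk(3) by simp
  qed
qed

lemma reds_extend:
  "red\<^sup>*\<^sup>* (c, s) (c', s') \<Longrightarrow> red\<^sup>*\<^sup>* (extend g1 c, extend g2 s) (extend g1 c', extend g2 s')"
  by (induction rule: rtranclp_induct2) (auto intro: rtranclp.rtrancl_into_rtrancl red_extend)

definition same_depth :: "cfg \<times> cfg \<Rightarrow> bool" where
  "same_depth p \<longleftrightarrow> length (fst (fst p)) = length (fst (snd p))"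

lemma ltr_depth:
  "ltr c l c' \<Longrightarrow> length (fst c') =
     (if l = LTau then length (fst c) else if l = LRb then length (fst c) - 1 else Suc (length (fst c)))"
  by (induction rule: ltr.induct) auto

lemma red_same_depth: "red p q \<Longrightarrow> same_depth p \<Longrightarrow> same_depth q"
  by (auto elim!: red.cases red_ct.cases simp: same_depth_def dest!: ltr_depth split: if_splits)

lemma reds_same_depth: "red\<^sup>*\<^sup>* p q \<Longrightarrow> same_depth p \<Longrightarrow> same_depth q"
  by (induction rule: rtranclp_induct) (auto intro: red_same_depth)

text \<open>A failing run started from empty histories gets stuck with empty histories, since
otherwise rule (rbk) would still apply.\<close>

lemma stuck_failure_empty_history:
  assumes "red\<^sup>*\<^sup>* (([], C r), ([], C s)) ((h1, X), (h2, Y))" "stuck ((h1, X), (h2, Y))" "\<not> is_one X"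
  shows "h1 = [] \<and> h2 = []"
proof -
  have len: "length h1 = length h2"
    using reds_same_depth[OF assms(1)] by (simp add: same_depth_def)
  show ?thesis
  proof (rule ccontr)
    assume "\<not> ?thesis"
    then obtain z h1' w h2' where h: "h1 = z # h1'" "h2 = w # h2'" using len
      by (cases h1; cases h2) auto
    have "\<not> (\<exists>q. red_ct ((h1, X), (h2, Y)) q)" using assms(2) unfolding stuck_def by (blast intro: red.ct)
    then have "red ((h1, X), (h2, Y)) ((h1', z), (h2', w))"
      using red.rbk[OF ltr.rb ltr.rb] assms(3) h by simp
    then show False using assms(2) unfolding stuck_def by blast
  qed
qed

lemma fails_rollback:
  assumes "fails (([], C r), ([], C s))"
  shows "red\<^sup>*\<^sup>* ((x1 # g1, C r), (x2 # g2, C s)) ((g1, x1), (g2, x2))"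
proof -
  obtain h1 X h2 Y where run: "red\<^sup>*\<^sup>* (([], C r), ([], C s)) ((h1, X), (h2, Y))"
    and st: "stuck ((h1, X), (h2, Y))" and X: "\<not> is_one X"
    using assms unfolding fails_def by fastforce
  then have h: "h1 = []" "h2 = []" using stuck_failure_empty_history by blast+
  let ?g1 = "x1 # g1" and ?g2 = "x2 # g2"
  have "red\<^sup>*\<^sup>* ((?g1, C r), (?g2, C s)) ((?g1, X), (?g2, Y))"
    using reds_extend[OF run, of ?g1 ?g2] h by simp
  moreover have "\<not> (\<exists>q. red_ct (([], X), ([], Y)) q)"
    using st h unfolding stuck_def by (blast intro: red.ct)
  then have "\<not> (\<exists>q. red_ct ((?g1, X), (?g2, Y)) q)"
    using red_ct_extend_inv[of ?g1 "([], X)" ?g2 "([], Y)"] by auto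
  then have "red ((?g1, X), (?g2, Y)) ((g1, x1), (g2, x2))"
    using red.rbk[OF ltr.rb ltr.rb] X by simp
  ultimately show ?thesis by simp
qed

section \<open>Failure of retractable sums\<close>

definition rsum :: "bool \<Rightarrow> (nat \<times> ctr) fset \<Rightarrow> ctr" where
  "rsum p S = (if p then Inp S else ROut S)"

definition act :: "bool \<Rightarrow> nat \<Rightarrow> lab" where
  "act p a = (if p then LIn a else LOut a)"

definition pushed :: "bool \<Rightarrow> (nat \<times> ctr) fset \<Rightarrow> nat \<Rightarrow> ctr \<Rightarrow> cst" where
  "pushed p S a c = (if 2 \<le> fcard S then C (rsum p (S |-| {|(a, c)|})) else Circ)"

lemma act_ne: "act p a \<noteq> LTau" "act p a \<noteq> LRb"
  by (simp_all add: act_def)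

lemma rsum_choice: "rsum p \<in> {Inp, ROut, UOut}"
  by (cases p) (simp_all add: rsum_def fun_eq_iff)

lemma shape_rsum: "shape (rsum p S) = (if p then SInp (fst |`| S) else SROut (fst |`| S))"
  by (simp add: rsum_def shape_def)

lemma ltr_rsum:
  assumes "eqv x (rsum p S)" "choice_ok S" "(a, c) |\<in>| S"
  shows "ltr (h, C x) (act p a) (pushed p S a c # h, C c)"
proof (cases "2 \<le> fcard S")
  case True
  then show ?thesis using assms
    by (cases p) (auto simp: rsum_def act_def pushed_def intro: ltr.inp_sum ltr.rout_sum)
next
  case False
  then have "S = {|(a, c)|}"
    using assms(2,3) fset_eq_singleton[OF _ False] by (auto simp: choice_ok_def)
  then show ?thesis using assms False
    by (cases p) (auto simp: rsum_def act_def pushed_def intro: ltr.inp_one ltr.out_one)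
qed

lemma children_rsum: "children (rsum p S) = snd ` fset S"
  by (simp add: rsum_def)

lemma tau_free_rsum: "wfo (rsum p S) \<Longrightarrow> tau_free (C (rsum p S))"
  by (simp add: tau_free_def shape_rsum)

lemma tau_free_pushed:
  assumes "wfo (rsum p S)" "choice_ok S"
  shows "tau_free (pushed p S a c)"
proof (cases "2 \<le> fcard S")
  case True
  then have "choice_ok (S |-| {|(a, c)|})" using assms(2) choice_ok_fminus by blast
  then have "wfo (rsum p (S |-| {|(a, c)|}))"
    using wfo_choice_subset[OF rsum_choice assms(1)] by blast
  then show ?thesis using True by (simp add: pushed_def tau_free_rsum)
qed (simp add: pushed_def tau_free_def)

lemma not_is_one_pushed: "\<not> is_one (pushed p S a c)"
  by (cases p) (simp_all add: pushed_def not_is_one_Circ not_is_one_shape shape_rsum)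

text \<open>If every pair of branches with a common name fails, so does the pair of sums: the
branches are tried one after the other, each failure being rolled back.\<close>

lemma fails_rsum:
  assumes "eqv x (rsum p R)" "eqv y (rsum (\<not> p) S)" "wfo x" "wfo y"
    "\<forall>a rk sk. (a, rk) |\<in>| R \<longrightarrow> (a, sk) |\<in>| S \<longrightarrow> fails (([], C rk), ([], C sk))"
  shows "fails (([], C x), ([], C y))"
  using assms
proof (induction "fcard R" arbitrary: R S x y rule: less_induct)
  case less
  have wR: "wfo (rsum p R)" and wS: "wfo (rsum (\<not> p) S)" using less.prems wfo_eqv by blast+
  then have cR: "choice_ok R" and cS: "choice_ok S" using wfo_choice_ok rsum_choice by blast+
  have shx: "shape x = shape (rsum p R)" and shy: "shape y = shape (rsum (\<not> p) S)"
    using less.prems(1,2) by (simp_all add: eqv_shape)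
  show ?case
  proof (cases "\<exists>a rk sk. (a, rk) |\<in>| R \<and> (a, sk) |\<in>| S")
    case True
    then obtain a rk sk where br: "(a, rk) |\<in>| R" "(a, sk) |\<in>| S" by blast
    define P Q where "P = pushed p R a rk" and "Q = pushed (\<not> p) S a sk"
    have "ltr ([], C x) (act p a) ([P], C rk)" "ltr ([], C y) (dual (act p a)) ([Q], C sk)"
      using ltr_rsum[OF less.prems(1) cR br(1), where h="[]"] ltr_rsum[OF less.prems(2) cS br(2), where h="[]"]
      by (cases p; simp add: P_def Q_def act_def)+
    then have "red (([], C x), ([], C y)) (([P], C rk), ([Q], C sk))"
      by (rule red.ct[OF red_ct.comm[OF _ _ act_ne]])
    moreover have "red\<^sup>*\<^sup>* (([P], C rk), ([Q], C sk)) (([], P), ([], Q))"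
      using fails_rollback less.prems(5) br by blast
    moreover have "fails (([], P), ([], Q))"
    proof (cases "2 \<le> fcard R \<and> 2 \<le> fcard S")
      case True
      let ?R' = "R |-| {|(a, rk)|}" and ?S' = "S |-| {|(a, sk)|}"
      have "choice_ok ?R'" "choice_ok ?S'" using cR cS True choice_ok_fminus by blast+
      then have "wfo (rsum p ?R')" "wfo (rsum (\<not> p) ?S')"
        using wR wS wfo_choice_subset[OF rsum_choice] by blast+
      moreover have "\<forall>a rk sk. (a, rk) |\<in>| ?R' \<longrightarrow> (a, sk) |\<in>| ?S' \<longrightarrow> fails (([], C rk), ([], C sk))"
        using less.prems(5) by auto
      ultimately have "fails (([], C (rsum p ?R')), ([], C (rsum (\<not> p) ?S')))"
        using less.hyps[OF fcard_fminus1_less[OF br(1)] eqv_refl eqv_refl] by blast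
      then show ?thesis using True by (simp add: P_def Q_def pushed_def)
    next
      case False
      then have "P = Circ \<or> Q = Circ" by (auto simp: P_def Q_def pushed_def)
      moreover have "tau_free P" "tau_free Q" "\<not> is_one P"
        using tau_free_pushed[OF wR cR] tau_free_pushed[OF wS cS] not_is_one_pushed
        by (simp_all add: P_def Q_def)
      ultimately have "stuck (([], P), ([], Q))"
        by (intro stuckI) (auto simp: inputs_def outputs_def)
      then show ?thesis using \<open>\<not> is_one P\<close> fails_stuck by simp
    qed
    ultimately show ?thesis by (meson converse_rtranclp_into_rtranclp fails_red)
  next
    case False
    have "stuck (([], C x), ([], C y))"
    proof (rule stuckI)
      show "tau_free (C x)" "tau_free (C y)"
        using less.prems(3,4) shx shy by (simp_all add: tau_free_def shape_rsum)
      show "inputs (C x) |\<inter>| outputs (C y) = {||}" "outputs (C x) |\<inter>| inputs (C y) = {||}"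
        using False shx shy by (auto simp: inputs_def outputs_def shape_rsum dest!: names_mem)
    qed simp
    moreover have "\<not> is_one (C x)" using shx by (intro not_is_one_shape) (simp add: shape_rsum)
    ultimately show ?thesis using fails_stuck by simp
  qed
qed

lemma compliant_rsum:
  assumes "compliant x y" "eqv x (rsum p R)" "eqv y (rsum (\<not> p) S)" "wfo x" "wfo y"
  shows "\<exists>a rk sk. (a, rk) |\<in>| R \<and> (a, sk) |\<in>| S \<and> compliant rk sk"
  using fails_rsum[OF assms(2-5)] assms(1) by (auto simp: compliant_iff_not_fails)

text \<open>Against an unretractable output, each of its branches can be forced by a \<open>\<tau>\<close> step;
the resulting unary output is then a retractable sum.\<close>

lemma compliant_Inp_UOut:
  assumes "compliant x y" "eqv x (Inp R)" "eqv y (UOut S)" "2 \<le> fcard S" "wfo x" "wfo y"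
  shows "fst |`| S |\<subseteq>| fst |`| R \<and> (\<forall>a ra sa. (a, ra) |\<in>| R \<longrightarrow> (a, sa) |\<in>| S \<longrightarrow> compliant ra sa)"
proof -
  have branch: "\<exists>ra. (a, ra) |\<in>| R \<and> compliant ra sa" if sa: "(a, sa) |\<in>| S" for a sa
  proof -
    let ?y' = "UOut {|(a, sa)|}"
    have "compliant x ?y'"
      using compliant_red[OF assms(1) red.ct[OF red_ct.tau_r[OF ltr.uout_tau[OF assms(3) sa assms(4)]]]] .
    moreover have "wfo ?y'" using wfo_UOut_singleton[OF wfo_eqv[OF assms(3,6)] sa] .
    then have "eqv ?y' (rsum (\<not> True) {|(a, sa)|})" by (simp add: eqv_UOut_singleton rsum_def)
    moreover have "eqv x (rsum True R)" using assms(2) by (simp add: rsum_def)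
    ultimately show ?thesis using compliant_rsum assms(5) \<open>wfo ?y'\<close> by fastforce
  qed
  have "choice_ok R" using wfo_choice_ok[of Inp] wfo_eqv[OF assms(2,5)] by simp
  then have "compliant ra sa" if "(a, ra) |\<in>| R" "(a, sa) |\<in>| S" for a ra sa
    using branch[OF that(2)] that(1) choice_ok_unique by blast
  moreover have "fst |`| S |\<subseteq>| fst |`| R" using branch by (meson fsubsetI names_mem mem_names)
  ultimately show ?thesis by blast
qed

lemma compliant_UOut_Inp:
  assumes "compliant x y" "eqv x (UOut R)" "eqv y (Inp S)" "2 \<le> fcard R" "wfo x" "wfo y"
  shows "fst |`| R |\<subseteq>| fst |`| S \<and> (\<forall>a ra sa. (a, ra) |\<in>| R \<longrightarrow> (a, sa) |\<in>| S \<longrightarrow> compliant ra sa)"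
proof -
  have branch: "\<exists>sa. (a, sa) |\<in>| S \<and> compliant ra sa" if ra: "(a, ra) |\<in>| R" for a ra
  proof -
    let ?x' = "UOut {|(a, ra)|}"
    have "compliant ?x' y"
      using compliant_red[OF assms(1) red.ct[OF red_ct.tau_l[OF ltr.uout_tau[OF assms(2) ra assms(4)]]]] .
    moreover have "wfo ?x'" using wfo_UOut_singleton[OF wfo_eqv[OF assms(2,5)] ra] .
    then have "eqv ?x' (rsum False {|(a, ra)|})" by (simp add: eqv_UOut_singleton rsum_def)
    moreover have "eqv y (rsum (\<not> False) S)" using assms(3) by (simp add: rsum_def)
    ultimately show ?thesis using compliant_rsum assms(6) \<open>wfo ?x'\<close> by fastforce
  qed
  have "choice_ok S" using wfo_choice_ok[of Inp] wfo_eqv[OF assms(3,6)] by simp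
  then have "compliant ra sa" if "(a, ra) |\<in>| R" "(a, sa) |\<in>| S" for a ra sa
    using branch[OF that(1)] that(2) choice_ok_unique by blast
  moreover have "fst |`| R |\<subseteq>| fst |`| S" using branch by (meson fsubsetI names_mem mem_names)
  ultimately show ?thesis by blast
qed

lemma tau_resolve:
  assumes "wfo x" "eqv x x'" "hnf x'"
  obtains x'' where "x'' = x \<or> ltr ([], C x) LTau ([], C x'')" "tau_free (C x'')"
    "shape x'' = SOne \<longleftrightarrow> x' = One" "(\<exists>N. shape x'' = SInp N) \<longleftrightarrow> (\<exists>R. x' = Inp R)"
proof -
  have sh: "shape x = shape x'" using assms(2) by (rule eqv_shape)
  consider "x' = One" | R where "x' = Inp R" | R where "x' = ROut R"
    | R where "x' = UOut R" "2 \<le> fcard R"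
    using assms(3) unfolding hnf_def by blast
  then show ?thesis
  proof cases
    case (4 R)
    then have "R \<noteq> {||}" by (auto simp: fcard_fempty)
    then obtain a ra where ra: "(a, ra) |\<in>| R" by fastforce
    have "ltr ([], C x) LTau ([], C (UOut {|(a, ra)|}))"
      using ltr.uout_tau[OF _ ra \<open>2 \<le> fcard R\<close>] assms(2) 4 by simp
    moreover have "wfo (UOut {|(a, ra)|})" using wfo_UOut_singleton wfo_eqv assms(1,2) 4 ra by blast
    ultimately show ?thesis using 4 by (intro that[of "UOut {|(a, ra)|}"]) (auto simp: tau_free_def shape_def)
  qed (use assms(1) sh that[of x] in \<open>auto simp: tau_free_def shape_def\<close>)
qed

text \<open>For any other pair of head normal forms, once both unretractable outputs have committed
by a \<open>\<tau>\<close> step, no synchronisation is possible while the client is not \<open>One\<close>.\<close>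

lemma compliant_hnf_dual:
  assumes "compliant x y" "eqv x x'" "eqv y y'" "hnf x'" "hnf y'" "x' \<noteq> One" "wfo x" "wfo y"
  shows "y' \<noteq> One \<and> ((\<exists>R. x' = Inp R) \<longleftrightarrow> \<not> (\<exists>S. y' = Inp S))"
proof (rule ccontr)
  assume dual: "\<not> ?thesis"
  obtain x'' where x'': "x'' = x \<or> ltr ([], C x) LTau ([], C x'')" "tau_free (C x'')"
    "shape x'' = SOne \<longleftrightarrow> x' = One" "(\<exists>N. shape x'' = SInp N) \<longleftrightarrow> (\<exists>R. x' = Inp R)"
    using tau_resolve[OF assms(7,2,4)] by blast
  obtain y'' where y'': "y'' = y \<or> ltr ([], C y) LTau ([], C y'')" "tau_free (C y'')"
    "shape y'' = SOne \<longleftrightarrow> y' = One" "(\<exists>N. shape y'' = SInp N) \<longleftrightarrow> (\<exists>S. y' = Inp S)"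
    using tau_resolve[OF assms(8,3,5)] by blast
  have "red\<^sup>*\<^sup>* (([], C x), ([], C y)) (([], C x''), ([], C y))"
    using x''(1) by (auto intro: red.ct red_ct.tau_l)
  also have "red\<^sup>*\<^sup>* \<dots> (([], C x''), ([], C y''))"
    using y''(1) by (auto intro: red.ct red_ct.tau_r)
  finally have run: "red\<^sup>*\<^sup>* (([], C x), ([], C y)) (([], C x''), ([], C y''))" .
  have "\<forall>N. shape x'' \<noteq> SUOut N" "\<forall>N. shape y'' \<noteq> SUOut N"
    using x''(2) y''(2) by (simp_all add: tau_free_def)
  then have "inputs (C x'') |\<inter>| outputs (C y'') = {||} \<and> outputs (C x'') |\<inter>| inputs (C y'') = {||}"
    using dual assms(6) x''(3,4) y''(3,4)
    by (cases "shape x''"; cases "shape y''") (auto simp: inputs_def outputs_def)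
  then have "stuck (([], C x''), ([], C y''))" using x''(2) y''(2) by (intro stuckI) auto
  moreover have "\<not> is_one (C x'')" using x''(3) assms(6) by (intro not_is_one_shape) simp
  ultimately have "fails (([], C x), ([], C y))" using fails_stuck fails_red[OF run] by simp
  then show False using assms(1) compliant_iff_not_fails by blast
qed

section \<open>Completeness of the formal system\<close>

lemma hnf_complementary_cases:
  assumes "hnf r'" "hnf s'" "r' \<noteq> One" "s' \<noteq> One" "(\<exists>R. r' = Inp R) \<longleftrightarrow> \<not> (\<exists>S. s' = Inp S)"
  obtains (rsum) p R S where "r' = rsum p R" "s' = rsum (\<not> p) S"
    | (Inp_UOut) R S where "r' = Inp R" "s' = UOut S" "2 \<le> fcard S"
    | (UOut_Inp) R S where "r' = UOut R" "2 \<le> fcard R" "s' = Inp S"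
proof -
  obtain R where R: "r' = Inp R \<or> r' = ROut R \<or> (r' = UOut R \<and> 2 \<le> fcard R)"
    using assms(1,3) by (auto simp: hnf_def)
  obtain S where S: "s' = Inp S \<or> s' = ROut S \<or> (s' = UOut S \<and> 2 \<le> fcard S)"
    using assms(2,4) by (auto simp: hnf_def)
  note cases = that(1)[of True] that(1)[of False] that(2,3)
  show ?thesis using R S assms(5) by (elim disjE conjE) (simp_all add: cases rsum_def)
qed

lemma deriv_hnf:
  assumes "compliant r s" "wfo r" "wfo s" "eqv r r'" "eqv s s'" "hnf r'" "hnf s'"
    and IH: "\<And>rk sk. rk \<in> children r' \<Longrightarrow> sk \<in> children s' \<Longrightarrow> compliant rk sk \<Longrightarrow>
      deriv (insert (r, s) \<Gamma>) rk sk"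
  shows "deriv \<Gamma> r s"
proof (cases "r' = One")
  case True
  then show ?thesis using assms(4) by (intro deriv.Ax) simp
next
  case False
  then have "s' \<noteq> One" and dual: "(\<exists>R. r' = Inp R) \<longleftrightarrow> \<not> (\<exists>S. s' = Inp S)"
    using compliant_hnf_dual[OF assms(1,4,5,6,7) _ assms(2,3)] by blast+
  from assms(6,7) False \<open>s' \<noteq> One\<close> dual show ?thesis
  proof (cases rule: hnf_complementary_cases)
    case (rsum p R S)
    then obtain a rk sk where br: "(a, rk) |\<in>| R" "(a, sk) |\<in>| S" "compliant rk sk"
      using compliant_rsum[OF assms(1) _ _ assms(2,3)] assms(4,5) by blast
    then have "deriv (insert (r, s) \<Gamma>) rk sk" using IH rsum by (simp add: mem_children children_rsum)
    then show ?thesis using assms(4,5) rsum br(1,2)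
      by (cases p) (simp_all add: rsum_def deriv.PlusPlus_io deriv.PlusPlus_oi)
  next
    case (Inp_UOut R S)
    have eqs: "eqv r (Inp R)" "eqv s (UOut S)" using assms(4,5) Inp_UOut by simp_all
    note comp = compliant_Inp_UOut[OF assms(1) eqs Inp_UOut(3) assms(2,3)]
    then have "\<forall>a ra sa. (a, ra) |\<in>| R \<longrightarrow> (a, sa) |\<in>| S \<longrightarrow> deriv (insert (r, s) \<Gamma>) ra sa"
      using IH Inp_UOut by (simp add: mem_children)
    then show ?thesis using deriv.PlusOplus[OF eqs] comp by simp
  next
    case (UOut_Inp R S)
    have eqs: "eqv r (UOut R)" "eqv s (Inp S)" using assms(4,5) UOut_Inp by simp_all
    note comp = compliant_UOut_Inp[OF assms(1) eqs UOut_Inp(2) assms(2,3)]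
    then have "\<forall>a ra sa. (a, ra) |\<in>| R \<longrightarrow> (a, sa) |\<in>| S \<longrightarrow> deriv (insert (r, s) \<Gamma>) ra sa"
      using IH UOut_Inp by (simp add: mem_children)
    then show ?thesis using deriv.OplusPlus[OF eqs] comp by simp
  qed
qed

text \<open>Induction on the number of pairs of the two finite universes not yet assumed in \<open>\<Gamma>\<close>:
every rule other than (Hyp) adds the current pair to the assumptions.\<close>

lemma compliant_deriv:
  assumes Ur: "\<forall>x\<in>Ur. unfolds_within Ur x" and Us: "\<forall>x\<in>Us. unfolds_within Us x"
    and fin: "finite Ur" "finite Us"
  shows "\<Gamma> \<subseteq> Ur \<times> Us \<Longrightarrow> r \<in> Ur \<Longrightarrow> s \<in> Us \<Longrightarrow> compliant r s \<Longrightarrow> deriv \<Gamma> r s"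
proof (induction "card (Ur \<times> Us - \<Gamma>)" arbitrary: \<Gamma> r s rule: less_induct)
  case less
  show ?case
  proof (cases "(r, s) \<in> \<Gamma>")
    case True
    then show ?thesis by (rule deriv.Hyp) simp_all
  next
    case False
    then have "card (Ur \<times> Us - insert (r, s) \<Gamma>) < card (Ur \<times> Us - \<Gamma>)"
      using less.prems fin by (intro psubset_card_mono) auto
    then have IH: "deriv (insert (r, s) \<Gamma>) r0 s0" if "r0 \<in> Ur" "s0 \<in> Us" "compliant r0 s0" for r0 s0
      using less.hyps less.prems that by auto
    obtain r' where r': "eqv r r'" "hnf r'" "children r' \<subseteq> Ur"
      using hnf_exists[OF Ur less.prems(2)] by blast
    obtain s' where s': "eqv s s'" "hnf s'" "children s' \<subseteq> Us"
      using hnf_exists[OF Us less.prems(3)] by blast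
    have "wfo r" "wfo s" using Ur Us less.prems(2,3) by (auto simp: wfo_def unfolds_within_def)
    then show ?thesis using deriv_hnf[OF less.prems(4) _ _ r'(1) s'(1) r'(2) s'(2)] IH r'(3) s'(3) by blast
  qed
qed

theorem theorem3:
  assumes "rcontract \<rho>" and "rcontract \<sigma>" and "compliant \<rho> \<sigma>"
  shows "deriv {} \<rho> \<sigma>"
proof -
  have "wf_at 0 \<rho>" "wf_at 0 \<sigma>" using assms(1,2) by (simp_all add: rcontract_def)
  then show ?thesis
    using compliant_deriv[of "universe \<rho>" "universe \<sigma>"] universe_unfolds_within finite_universe
      mem_universe assms(3) by simp
qed

end
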